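(* Let $\sigma : X^+ \to S$ be a choice of generators for a semigroup $S$. Let $S^0$ be $S$ with a new zero $0$ adjoined, let $Y = X \cup \{z\}$ for a new letter $z$, and let $\tau : Y^+ \to S^0$ be the unique extension of $\sigma$ to a choice of generators for $S^0$ (so $z\tau = 0$). Then $L_\sigma(S) = L_\tau(S^0) \cap \hat{X}^*$.
   Context: For a semigroup $S$, $S^1$ denotes the monoid obtained by adjoining a new identity $1$ (even if $S$ already has one). A choice of generators for $S$ is a surjective morphism $\sigma : X^+ \to S$ from a free semigroup; it extends uniquely to $\sigma^1 : X^* \to S^1$. Let $\overline{X} = \{\overline{x} : x \in X\}$ be a set of formal inverses, $\hat{X} = X \cup \overline{X}$. The loop automaton of $S$ with respect to $\sigma$ is the directed labelled graph with vertex set $S^1$, having for each $a \in S^1$ and $x \in X$ an edge from $a$ to $a(x\sigma)$ labelled $x$ and an edge from $a(x\sigma)$ to $a$ labelled $\overline{x}$. The loop problem $L_\sigma(S) \subseteq \hat{X}^*$ is the set of words labelling paths from $1$ to $1$ in this graph (including the empty word). *)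

theory Defs
  imports Main
begin

definition semigroup_on :: "'a set \<Rightarrow> ('a \<Rightarrow> 'a \<Rightarrow> 'a) \<Rightarrow> bool" where
  "semigroup_on S m \<longleftrightarrow> (\<forall>a\<in>S. \<forall>b\<in>S. m a b \<in> S) \<and>
     (\<forall>a\<in>S. \<forall>b\<in>S. \<forall>c\<in>S. m (m a b) c = m a (m b c))"

fun word_eval :: "('a \<Rightarrow> 'a \<Rightarrow> 'a) \<Rightarrow> ('x \<Rightarrow> 'a) \<Rightarrow> 'x list \<Rightarrow> 'a" where
  "word_eval m \<sigma> [] = undefined"
| "word_eval m \<sigma> (x # xs) = foldl (\<lambda>a y. m a (\<sigma> y)) (\<sigma> x) xs"

definition choice_of_generators ::
  "'a set \<Rightarrow> ('a \<Rightarrow> 'a \<Rightarrow> 'a) \<Rightarrow> 'x set \<Rightarrow> ('x \<Rightarrow> 'a) \<Rightarrow> bool" where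
  "choice_of_generators S m X \<sigma> \<longleftrightarrow> (\<forall>x\<in>X. \<sigma> x \<in> S) \<and>
     (\<forall>s\<in>S. \<exists>w. w \<in> lists X \<and> w \<noteq> [] \<and> word_eval m \<sigma> w = s)"

text \<open>S^1: adjoin a new identity None.\<close>
definition monoid1 :: "'a set \<Rightarrow> 'a option set" where
  "monoid1 S = insert None (Some ` S)"

fun mult1 :: "('a \<Rightarrow> 'a \<Rightarrow> 'a) \<Rightarrow> 'a option \<Rightarrow> 'a option \<Rightarrow> 'a option" where
  "mult1 m None b = b"
| "mult1 m (Some a) None = Some a"
| "mult1 m (Some a) (Some b) = Some (m a b)"

text \<open>S^0: adjoin a new zero None.\<close>
definition semigroup0 :: "'a set \<Rightarrow> 'a option set" where
  "semigroup0 S = insert None (Some ` S)"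

fun mult0 :: "('a \<Rightarrow> 'a \<Rightarrow> 'a) \<Rightarrow> 'a option \<Rightarrow> 'a option \<Rightarrow> 'a option" where
  "mult0 m (Some a) (Some b) = Some (m a b)"
| "mult0 m _ _ = None"

text \<open>Letters of hat X: Pos x = x, Neg x = formal inverse of x.\<close>
datatype 'x letter = Pos 'x | Neg 'x

definition hat :: "'x set \<Rightarrow> 'x letter set" where
  "hat X = Pos ` X \<union> Neg ` X"

text \<open>Paths in the loop automaton (vertex set S^1): lpath S m X sigma a w b means
  w labels a path from a to b.\<close>
inductive lpath :: "'a set \<Rightarrow> ('a \<Rightarrow> 'a \<Rightarrow> 'a) \<Rightarrow> 'x set \<Rightarrow> ('x \<Rightarrow> 'a)
    \<Rightarrow> 'a option \<Rightarrow> 'x letter list \<Rightarrow> 'a option \<Rightarrow> bool"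
  for S m X \<sigma> where
  lp_nil: "a \<in> monoid1 S \<Longrightarrow> lpath S m X \<sigma> a [] a"
| lp_pos: "a \<in> monoid1 S \<Longrightarrow> x \<in> X \<Longrightarrow> lpath S m X \<sigma> (mult1 m a (Some (\<sigma> x))) w b
            \<Longrightarrow> lpath S m X \<sigma> a (Pos x # w) b"
| lp_neg: "a \<in> monoid1 S \<Longrightarrow> x \<in> X \<Longrightarrow> lpath S m X \<sigma> a w b
            \<Longrightarrow> lpath S m X \<sigma> (mult1 m a (Some (\<sigma> x))) (Neg x # w) b"

definition loop_problem :: "'a set \<Rightarrow> ('a \<Rightarrow> 'a \<Rightarrow> 'a) \<Rightarrow> 'x set \<Rightarrow> ('x \<Rightarrow> 'a)
    \<Rightarrow> 'x letter list set" where
  "loop_problem S m X \<sigma> = {w. lpath S m X \<sigma> None w None}"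

text \<open>The extension tau of sigma to Y = X \<union> {z}, with Y represented as Some ` X \<union> {None}
  (None = z) and S^0 with None = 0.\<close>
fun tau0 :: "('x \<Rightarrow> 'a) \<Rightarrow> 'x option \<Rightarrow> 'a option" where
  "tau0 \<sigma> None = None"
| "tau0 \<sigma> (Some x) = Some (\<sigma> x)"

end

theory Submission
  imports Defs
begin

text \<open>The inclusion a \<mapsto> a of S^1 into (S^0)^1 maps the loop automaton of S isomorphically
  onto the part of the loop automaton of S^0 spanned by the nonzero vertices and the edges labelled
  by letters from X. A path from 1 reading only such letters never reaches the zero: an X-edge out of
  a nonzero vertex a goes to a x \<noteq> 0, and an inverse edge into a vertex c x \<noteq> 0 comes from c \<noteq> 0.
  Hence these paths are the same in both automata. In the option encoding the inclusion is
  map_option Some, and the zero of S^0 is the vertex Some None.\<close>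

inductive_simps lpath_Nil_iff: "lpath S m X \<sigma> a [] b"
inductive_simps lpath_Pos_iff: "lpath S m X \<sigma> a (Pos x # w) b"
inductive_simps lpath_Neg_iff: "lpath S m X \<sigma> a (Neg x # w) b"

lemma lpath_imp_lists_hat: "lpath S m X \<sigma> a w b \<Longrightarrow> w \<in> lists (hat X)"
  by (induction rule: lpath.induct) (auto simp: hat_def)

lemma hat_image: "hat (f ` X) = map_letter f ` hat X"
  by (simp add: hat_def image_Un image_image)

lemmas map_option_Some_eq_iff = inj_eq[OF option.inj_map[OF inj_Some]]

lemma map_option_Some_in_monoid1_semigroup0_iff:
  "map_option Some a \<in> monoid1 (semigroup0 S) \<longleftrightarrow> a \<in> monoid1 S"
  by (cases a) (auto simp: monoid1_def semigroup0_def)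

lemma mult1_mult0_map_option_Some:
  "mult1 (mult0 m) (map_option Some a) (Some (Some s)) = map_option Some (mult1 m a (Some s))"
  by (cases a) auto

lemma map_option_Some_eq_mult1_mult0_iff:
  "map_option Some a = mult1 (mult0 m) c (Some (Some s)) \<longleftrightarrow>
     (\<exists>c'. c = map_option Some c' \<and> a = mult1 m c' (Some s))"
proof
  assume product: "map_option Some a = mult1 (mult0 m) c (Some (Some s))"
  then have "c \<noteq> Some None"
    by (cases a) auto
  then have c: "c = map_option Some (map_option the c)"
    by (cases c) auto
  with product have "map_option Some a = map_option Some (mult1 m (map_option the c) (Some s))"
    by (metis mult1_mult0_map_option_Some)
  with c show "\<exists>c'. c = map_option Some c' \<and> a = mult1 m c' (Some s)"
    by (auto simp: map_option_Some_eq_iff)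
qed (auto simp: mult1_mult0_map_option_Some)

lemma lpath_semigroup0_iff:
  assumes "w \<in> lists (hat X)"
  shows "lpath (semigroup0 S) (mult0 m) (insert None (Some ` X)) (tau0 \<sigma>)
           (map_option Some a) (map (map_letter Some) w) (map_option Some b)
         \<longleftrightarrow> lpath S m X \<sigma> a w b"
    (is "?lpath0 (map_option Some a) w \<longleftrightarrow> _")
  using assms
proof (induction w arbitrary: a)
  case Nil
  then show ?case
    by (auto simp: lpath_Nil_iff map_option_Some_in_monoid1_semigroup0_iff
        map_option_Some_eq_iff)
next
  case (Cons l w)
  then obtain x where x: "x \<in> X" and "l = Pos x \<or> l = Neg x" and "w \<in> lists (hat X)"
    by (auto simp: hat_def)
  with Cons.IH have IH: "?lpath0 (map_option Some c) w \<longleftrightarrow> lpath S m X \<sigma> c w b" for c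
    by blast
  consider "l = Pos x" | "l = Neg x"
    using \<open>l = Pos x \<or> l = Neg x\<close> by blast
  then show ?case
  proof cases
    case 1
    then show ?thesis
      using x IH
      by (simp add: lpath_Pos_iff map_option_Some_in_monoid1_semigroup0_iff
          mult1_mult0_map_option_Some)
  next
    case 2
    have "?lpath0 (map_option Some a) (l # w) \<longleftrightarrow>
        (\<exists>c. map_option Some a = mult1 (mult0 m) c (Some (Some (\<sigma> x)))
          \<and> c \<in> monoid1 (semigroup0 S) \<and> ?lpath0 c w)"
      using 2 x by (simp add: lpath_Neg_iff)
    also have "\<dots> \<longleftrightarrow> (\<exists>c. a = mult1 m c (Some (\<sigma> x))
          \<and> map_option Some c \<in> monoid1 (semigroup0 S) \<and> ?lpath0 (map_option Some c) w)"
      by (auto simp: map_option_Some_eq_mult1_mult0_iff)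
    also have "\<dots> \<longleftrightarrow> lpath S m X \<sigma> a (l # w) b"
      unfolding 2 lpath_Neg_iff IH map_option_Some_in_monoid1_semigroup0_iff using x by blast
    finally show ?thesis .
  qed
qed

lemma image_eq_Int_image:
  assumes "L \<subseteq> A" and "\<And>w. w \<in> A \<Longrightarrow> f w \<in> L' \<longleftrightarrow> w \<in> L"
  shows "f ` L = L' \<inter> f ` A"
  using assms by blast

theorem corollary3p3:
  fixes S :: "'a set" and m :: "'a \<Rightarrow> 'a \<Rightarrow> 'a" and X :: "'x set" and \<sigma> :: "'x \<Rightarrow> 'a"
  assumes "semigroup_on S m"
    and "choice_of_generators S m X \<sigma>"
  shows "map (map_letter Some) ` loop_problem S m X \<sigma>
       = loop_problem (semigroup0 S) (mult0 m) (insert None (Some ` X)) (tau0 \<sigma>)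
         \<inter> lists (hat (Some ` X))"
proof -
  have lists_hat_Some: "lists (hat (Some ` X)) = map (map_letter Some) ` lists (hat X)"
    by (simp add: hat_image lists_image)
  have "loop_problem S m X \<sigma> \<subseteq> lists (hat X)"
    by (auto simp: loop_problem_def dest: lpath_imp_lists_hat)
  moreover have "map (map_letter Some) w
      \<in> loop_problem (semigroup0 S) (mult0 m) (insert None (Some ` X)) (tau0 \<sigma>)
      \<longleftrightarrow> w \<in> loop_problem S m X \<sigma>" if "w \<in> lists (hat X)" for w
    using lpath_semigroup0_iff[OF that, where a = None and b = None]
    by (simp add: loop_problem_def)
  ultimately show ?thesis
    unfolding lists_hat_Some by (rule image_eq_Int_image)
qed

end
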